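(* Let $\sigma,\mu\in S_n$. Then: (i) $\mathrm{Seg}(\sigma)$ is a partition of $\{1,\dots,n\}$. (ii) The intersection of any two $\sigma$-sections is either a $\sigma$-section or empty. (iii) The $\sigma$-sections are exactly the nonempty intervals of $\{1<\dots<n\}$ that are unions of $\sigma$-segments. (iv) $(\sigma,\mu)\in\rho_{ie}$ if and only if there are pairwise disjoint $\sigma$-sections $J_1,\dots,J_t$ with $J_1\cup\dots\cup J_t=\{1,\dots,n\}$ such that $\mu|_{J_i}\in\{\sigma|_{J_i},(\sigma|_{J_i})^{-1}\}$ for $i=1,\dots,t$. (v) $\rho_{ie}$ is an equivalence relation on $S_n$.
   Context: $S_n$ is the set of permutations of $\{1,\dots,n\}$ with the order $1<\dots<n$. For $\sigma\in S_n$, a subset $I$ is closed if $\sigma(i)\in I$ for all $i\in I$ ($\emptyset$ is closed). A nonempty interval $I=\{u,\dots,v\}$ is a $\sigma$-section if $\{1,\dots,u-1\}$, $I$ and $\{v+1,\dots,n\}$ are closed. Inclusion-minimal $\sigma$-sections are $\sigma$-segments; $\mathrm{Seg}(\sigma)$ is the set of them. $(\sigma,\mu)\in\rho_{ie}$ iff $\mathrm{Seg}(\sigma)=\mathrm{Seg}(\mu)$ and for all $I\in\mathrm{Seg}(\sigma)$, $\mu|_I\in\{\sigma|_I,(\sigma|_I)^{-1}\}$ (restrictions). *)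

theory Defs
  imports "HOL-Combinatorics.Permutations" "HOL-Library.Disjoint_Sets"
begin

definition Sn :: "nat \<Rightarrow> (nat \<Rightarrow> nat) set" where
  "Sn n = {\<sigma>. \<sigma> permutes {1..n}}"

definition closed_set :: "nat \<Rightarrow> (nat \<Rightarrow> nat) \<Rightarrow> nat set \<Rightarrow> bool" where
  "closed_set n \<sigma> I \<longleftrightarrow> I \<subseteq> {1..n} \<and> (\<forall>i\<in>I. \<sigma> i \<in> I)"

definition sigma_section :: "nat \<Rightarrow> (nat \<Rightarrow> nat) \<Rightarrow> nat set \<Rightarrow> bool" where
  "sigma_section n \<sigma> I \<longleftrightarrow> (\<exists>u v. 1 \<le> u \<and> u \<le> v \<and> v \<le> n \<and> I = {u..v} \<and>
      closed_set n \<sigma> {1..<u} \<and> closed_set n \<sigma> {u..v} \<and> closed_set n \<sigma> {v+1..n})"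

definition Seg :: "nat \<Rightarrow> (nat \<Rightarrow> nat) \<Rightarrow> nat set set" where
  "Seg n \<sigma> = {I. sigma_section n \<sigma> I \<and> (\<forall>J. sigma_section n \<sigma> J \<and> J \<subseteq> I \<longrightarrow> J = I)}"

definition restr :: "(nat \<Rightarrow> nat) \<Rightarrow> nat set \<Rightarrow> nat \<Rightarrow> nat" where
  "restr \<sigma> I = (\<lambda>i. if i \<in> I then \<sigma> i else i)"

definition rho_ie :: "nat \<Rightarrow> ((nat \<Rightarrow> nat) \<times> (nat \<Rightarrow> nat)) set" where
  "rho_ie n = {(\<sigma>, \<mu>). \<sigma> \<in> Sn n \<and> \<mu> \<in> Sn n \<and> Seg n \<sigma> = Seg n \<mu> \<and>
      (\<forall>I\<in>Seg n \<sigma>. restr \<mu> I = restr \<sigma> I \<or> restr \<mu> I = inv (restr \<sigma> I))}"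

end

theory Submission
  imports Defs
begin

text \<open>
  Call c a cut point of \<sigma> when {1..c} is \<sigma>-closed. As \<sigma> permutes {1..n}, complements of
  closed sets are closed, so the \<sigma>-sections are exactly the intervals {a+1..b} between cut
  points a < b, and the segments are the intervals between consecutive cut points; this gives
  (i)--(iii). For (iv), if \<mu> agrees with \<sigma> or \<sigma>\<inverse> on each block of a cover by sections,
  then \<sigma> and \<mu> have the same closed sets (a finite set is invariant under a permutation iff it
  is invariant under its inverse), hence the same segments, and the condition on a block
  descends to the segments inside it. For (v), the restriction of \<sigma> to a segment is a
  bijection, and "equal or inverse" is symmetric and transitive among bijections.
\<close>

lemma restr_eq_restrict_id: "restr = restrict_id"
  by (simp add: fun_eq_iff restr_def restrict_id_def)

lemma restr_restr: "I \<subseteq> J \<Longrightarrow> restr (restr f J) I = restr f I"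
  by (auto simp: fun_eq_iff restr_def)

lemma restr_image: "B \<subseteq> J \<Longrightarrow> restr f J ` B = f ` B"
  by (auto simp: restr_def)

lemma permutes_image_eq_of_subset:
  assumes "p permutes S" "finite B" "p ` B \<subseteq> B"
  shows "p ` B = B"
  using endo_inj_surj[OF assms(2,3) inj_on_subset[OF permutes_inj[OF assms(1)] subset_UNIV]] .

lemma permutes_inv_image_subset_iff:
  assumes p: "p permutes S" and B: "finite B"
  shows "inv p ` B \<subseteq> B \<longleftrightarrow> p ` B \<subseteq> B"
proof -
  have inv_closed: "inv q ` B \<subseteq> B" if q: "q permutes S" "q ` B \<subseteq> B" for q
  proof -
    have "inv q ` B = inv q ` q ` B"
      using permutes_image_eq_of_subset[OF q(1) B q(2)] by simp
    also have "\<dots> = B"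
      by (simp add: image_comp permutes_inv_o(2)[OF q(1)])
    finally show ?thesis by simp
  qed
  show ?thesis
  proof
    assume "inv p ` B \<subseteq> B"
    then have "inv (inv p) ` B \<subseteq> B"
      by (rule inv_closed[OF permutes_inv[OF p]])
    then show "p ` B \<subseteq> B"
      by (simp add: permutes_inv_inv[OF p])
  qed (rule inv_closed[OF p])
qed

lemma restr_permutes:
  assumes "p permutes S" "finite I" "p ` I \<subseteq> I"
  shows "restr p I permutes I"
  unfolding restr_eq_restrict_id
proof (rule permutes_restrict_id)
  show "bij_betw p I I"
    using permutes_image_eq_of_subset[OF assms] inj_on_subset[OF permutes_inj[OF assms(1)]]
    by (simp add: bij_betw_def)
qed

lemma inv_restr:
  assumes p: "p permutes S" and I: "finite I" "p ` I \<subseteq> I"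
  shows "inv (restr p I) = restr (inv p) I"
proof
  fix y
  have "restr p I (restr (inv p) I y) = y"
  proof (cases "y \<in> I")
    case True
    then have "inv p y \<in> I"
      using permutes_inv_image_subset_iff[OF p I(1)] I(2) by blast
    then show ?thesis
      using True permutes_inverses(1)[OF p] by (simp add: restr_def)
  qed (simp add: restr_def)
  then show "inv (restr p I) y = restr (inv p) I y"
    by (simp only: permutes_inv_eq[OF restr_permutes[OF assms]])
qed

lemma eq_or_inv_sym:
  assumes "bij f" "g = f \<or> g = inv f"
  shows "f = g \<or> f = inv g"
  using assms(2) by (elim disjE) (simp_all add: inv_inv_eq[OF assms(1)])

lemma eq_or_inv_trans:
  assumes f: "bij f" and g: "g = f \<or> g = inv f" and h: "h = g \<or> h = inv g"
  shows "h = f \<or> h = inv f"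
  using g
proof
  assume "g = f"
  then show ?thesis using h by blast
next
  assume "g = inv f"
  then show ?thesis using h inv_inv_eq[OF f] by metis
qed

lemma closed_set_iff: "closed_set n \<sigma> A \<longleftrightarrow> A \<subseteq> {1..n} \<and> \<sigma> ` A \<subseteq> A"
  by (auto simp: closed_set_def)

lemma closed_set_finite: "closed_set n \<sigma> A \<Longrightarrow> finite A"
  by (auto simp: closed_set_def intro: finite_subset)

lemma closed_set_Diff:
  assumes p: "\<sigma> permutes {1..n}" and A: "closed_set n \<sigma> A"
  shows "closed_set n \<sigma> ({1..n} - A)"
proof -
  have "\<sigma> ` A = A"
    using permutes_image_eq_of_subset[OF p closed_set_finite[OF A]] A by (simp add: closed_set_iff)
  then have "\<sigma> ` ({1..n} - A) = {1..n} - A"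
    by (simp only: image_set_diff[OF permutes_inj[OF p]] permutes_image[OF p])
  then show ?thesis by (simp add: closed_set_iff)
qed

lemma closed_set_Int: "closed_set n \<sigma> A \<Longrightarrow> closed_set n \<sigma> B \<Longrightarrow> closed_set n \<sigma> (A \<inter> B)"
  by (auto simp: closed_set_def)

lemma closed_set_Un: "closed_set n \<sigma> A \<Longrightarrow> closed_set n \<sigma> B \<Longrightarrow> closed_set n \<sigma> (A \<union> B)"
  by (auto simp: closed_set_def)

lemma closed_set_Union: "(\<And>A. A \<in> \<A> \<Longrightarrow> closed_set n \<sigma> A) \<Longrightarrow> closed_set n \<sigma> (\<Union>\<A>)"
  by (auto simp: closed_set_def)

lemma image_subset_iff_blockwise:
  assumes A: "A \<subseteq> \<Union>\<J>" and blocks: "\<And>J. J \<in> \<J> \<Longrightarrow> f ` J \<subseteq> J"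
  shows "f ` A \<subseteq> A \<longleftrightarrow> (\<forall>J\<in>\<J>. f ` (A \<inter> J) \<subseteq> A \<inter> J)"
proof
  assume "f ` A \<subseteq> A"
  then show "\<forall>J\<in>\<J>. f ` (A \<inter> J) \<subseteq> A \<inter> J"
    using blocks by blast
next
  assume A_blocks: "\<forall>J\<in>\<J>. f ` (A \<inter> J) \<subseteq> A \<inter> J"
  show "f ` A \<subseteq> A"
  proof
    fix y assume "y \<in> f ` A"
    then obtain x where x: "x \<in> A" "y = f x"
      by blast
    then obtain J where J: "J \<in> \<J>" "x \<in> J"
      using A by blast
    then have "f ` (A \<inter> J) \<subseteq> A \<inter> J"
      using A_blocks by simp
    then show "y \<in> A"
      using x J(2) by blast
  qed
qed

definition cut_point :: "nat \<Rightarrow> (nat \<Rightarrow> nat) \<Rightarrow> nat \<Rightarrow> bool" where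
  "cut_point n \<sigma> c \<longleftrightarrow> closed_set n \<sigma> {1..c}"

lemma cut_point_le: "cut_point n \<sigma> c \<Longrightarrow> c \<le> n"
  by (cases c) (auto simp: cut_point_def closed_set_def)

lemma cut_point_0: "cut_point n \<sigma> 0"
  by (simp add: cut_point_def closed_set_def)

lemma cut_point_top: "\<sigma> permutes {1..n} \<Longrightarrow> cut_point n \<sigma> n"
  by (simp add: cut_point_def closed_set_iff permutes_image)

lemma cut_point_max: "cut_point n \<sigma> a \<Longrightarrow> cut_point n \<sigma> b \<Longrightarrow> cut_point n \<sigma> (max a b)"
  by (simp add: max_def)

lemma cut_point_min: "cut_point n \<sigma> a \<Longrightarrow> cut_point n \<sigma> b \<Longrightarrow> cut_point n \<sigma> (min a b)"
  by (simp add: min_def)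

lemma sigma_section_iff_cut_points:
  assumes p: "\<sigma> permutes {1..n}"
  shows "sigma_section n \<sigma> I \<longleftrightarrow>
    (\<exists>a b. a < b \<and> cut_point n \<sigma> a \<and> cut_point n \<sigma> b \<and> I = {Suc a..b})"
proof
  assume "sigma_section n \<sigma> I"
  then obtain u v where uv: "1 \<le> u" "u \<le> v" "I = {u..v}"
    and lower: "closed_set n \<sigma> {1..<u}" and mid: "closed_set n \<sigma> {u..v}"
    unfolding sigma_section_def by blast
  have "{1..u - 1} = {1..<u}" "{1..v} = {1..<u} \<union> {u..v}"
    using uv by auto
  then have "cut_point n \<sigma> (u - 1)" "cut_point n \<sigma> v"
    using lower closed_set_Un[OF lower mid] by (simp_all add: cut_point_def)
  moreover have "u - 1 < v" "I = {Suc (u - 1)..v}"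
    using uv by auto
  ultimately show "\<exists>a b. a < b \<and> cut_point n \<sigma> a \<and> cut_point n \<sigma> b \<and> I = {Suc a..b}"
    by blast
next
  assume "\<exists>a b. a < b \<and> cut_point n \<sigma> a \<and> cut_point n \<sigma> b \<and> I = {Suc a..b}"
  then obtain a b where ab: "a < b" "closed_set n \<sigma> {1..a}" "closed_set n \<sigma> {1..b}" "I = {Suc a..b}"
    by (auto simp: cut_point_def)
  have "b \<le> n"
    using cut_point_le ab(3) by (simp add: cut_point_def)
  have "{1..<Suc a} = {1..a}" "{Suc a..b} = {1..b} \<inter> ({1..n} - {1..a})" "{b + 1..n} = {1..n} - {1..b}"
    using \<open>b \<le> n\<close> by auto
  then have "closed_set n \<sigma> {1..<Suc a}" "closed_set n \<sigma> {Suc a..b}" "closed_set n \<sigma> {b + 1..n}"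
    using ab(2) closed_set_Int[OF ab(3) closed_set_Diff[OF p ab(2)]] closed_set_Diff[OF p ab(3)]
    by simp_all
  then show "sigma_section n \<sigma> I"
    unfolding sigma_section_def using ab(1,4) \<open>b \<le> n\<close> by (intro exI[of _ "Suc a"] exI[of _ b]) simp
qed

lemma sigma_section_closed: "sigma_section n \<sigma> I \<Longrightarrow> closed_set n \<sigma> I"
  by (auto simp: sigma_section_def)

lemma sigma_section_nonempty: "sigma_section n \<sigma> I \<Longrightarrow> I \<noteq> {}"
  by (auto simp: sigma_section_def)

lemma sigma_section_subset: "sigma_section n \<sigma> I \<Longrightarrow> I \<subseteq> {1..n}"
  by (auto simp: sigma_section_def)

lemma Seg_sigma_section: "I \<in> Seg n \<sigma> \<Longrightarrow> sigma_section n \<sigma> I"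
  by (simp add: Seg_def)

lemma sigma_section_Int:
  assumes p: "\<sigma> permutes {1..n}" and I: "sigma_section n \<sigma> I" and J: "sigma_section n \<sigma> J"
  shows "I \<inter> J = {} \<or> sigma_section n \<sigma> (I \<inter> J)"
proof -
  obtain a b where ab: "a < b" "cut_point n \<sigma> a" "cut_point n \<sigma> b" "I = {Suc a..b}"
    using I sigma_section_iff_cut_points[OF p] by blast
  obtain c d where cd: "c < d" "cut_point n \<sigma> c" "cut_point n \<sigma> d" "J = {Suc c..d}"
    using J sigma_section_iff_cut_points[OF p] by blast
  have "I \<inter> J = {Suc (max a c)..min b d}"
    using ab cd by auto
  moreover have "cut_point n \<sigma> (max a c)" "cut_point n \<sigma> (min b d)"
    using ab cd cut_point_max cut_point_min by blast+
  ultimately show ?thesis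
    using sigma_section_iff_cut_points[OF p] by (cases "max a c < min b d") auto
qed

lemma Seg_subset_sigma_section:
  assumes p: "\<sigma> permutes {1..n}" and I: "I \<in> Seg n \<sigma>" and J: "sigma_section n \<sigma> J"
    and meet: "I \<inter> J \<noteq> {}"
  shows "I \<subseteq> J"
proof -
  have "sigma_section n \<sigma> (I \<inter> J)"
    using sigma_section_Int[OF p Seg_sigma_section[OF I] J] meet by blast
  then have "I \<inter> J = I"
    using I unfolding Seg_def by blast
  then show ?thesis by blast
qed

lemma Seg_eq_if_meet:
  "\<sigma> permutes {1..n} \<Longrightarrow> I \<in> Seg n \<sigma> \<Longrightarrow> J \<in> Seg n \<sigma> \<Longrightarrow> I \<inter> J \<noteq> {} \<Longrightarrow> I = J"
  using Seg_subset_sigma_section Seg_sigma_section by (metis inf_commute subset_antisym)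

lemma Seg_of_consecutive_cut_points:
  assumes p: "\<sigma> permutes {1..n}" and ab: "a < b" "cut_point n \<sigma> a" "cut_point n \<sigma> b"
    and between: "\<And>c. a < c \<Longrightarrow> c < b \<Longrightarrow> \<not> cut_point n \<sigma> c"
  shows "{Suc a..b} \<in> Seg n \<sigma>"
proof -
  have "J = {Suc a..b}" if J: "sigma_section n \<sigma> J" "J \<subseteq> {Suc a..b}" for J
  proof -
    obtain c d where cd: "c < d" "cut_point n \<sigma> c" "cut_point n \<sigma> d" "J = {Suc c..d}"
      using J(1) sigma_section_iff_cut_points[OF p] by blast
    have "a \<le> c" "d \<le> b"
      using J(2) cd by auto
    moreover have "c = a"
      using between[of c] cd \<open>d \<le> b\<close> \<open>a \<le> c\<close> by (cases "a < c") auto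
    moreover have "d = b"
      using between[of d] cd \<open>d \<le> b\<close> \<open>a \<le> c\<close> by (cases "d < b") auto
    ultimately show ?thesis
      using cd by simp
  qed
  moreover have "sigma_section n \<sigma> {Suc a..b}"
    using ab sigma_section_iff_cut_points[OF p] by auto
  ultimately show ?thesis
    unfolding Seg_def by blast
qed

lemma Seg_cover:
  assumes p: "\<sigma> permutes {1..n}" and x: "x \<in> {1..n}"
  shows "\<exists>I\<in>Seg n \<sigma>. x \<in> I"
proof -
  define a where "a = Max {c. c < x \<and> cut_point n \<sigma> c}"
  define b where "b = Min {c. x \<le> c \<and> cut_point n \<sigma> c}"
  have fin_below: "finite {c. c < x \<and> cut_point n \<sigma> c}"
    by (rule finite_subset[of _ "{..<x}"]) auto
  have fin_above: "finite {c. x \<le> c \<and> cut_point n \<sigma> c}"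
    by (rule finite_subset[of _ "{..n}"]) (auto dest: cut_point_le)
  have "0 \<in> {c. c < x \<and> cut_point n \<sigma> c}"
    using x cut_point_0 by auto
  then have "a \<in> {c. c < x \<and> cut_point n \<sigma> c}"
    unfolding a_def using fin_below by (intro Max_in) auto
  then have a: "a < x" "cut_point n \<sigma> a"
    by auto
  have "b \<in> {c. x \<le> c \<and> cut_point n \<sigma> c}"
    unfolding b_def using fin_above x cut_point_top[OF p] by (intro Min_in) auto
  then have b: "x \<le> b" "cut_point n \<sigma> b"
    by auto
  have "\<not> cut_point n \<sigma> c" if "a < c" "c < b" for c
  proof
    assume c: "cut_point n \<sigma> c"
    show False
    proof (cases "c < x")
      case True
      then have "c \<le> a"
        using Max_ge[OF fin_below] c unfolding a_def by blast
      then show False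
        using \<open>a < c\<close> by simp
    next
      case False
      then have "b \<le> c"
        using Min_le[OF fin_above] c unfolding b_def by simp
      then show False
        using \<open>c < b\<close> by simp
    qed
  qed
  then have "{Suc a..b} \<in> Seg n \<sigma>"
    using Seg_of_consecutive_cut_points[OF p _ a(2) b(2)] a(1) b(1) by simp
  moreover have "x \<in> {Suc a..b}"
    using a b by simp
  ultimately show ?thesis
    by blast
qed

lemma partition_on_Seg:
  assumes p: "\<sigma> permutes {1..n}"
  shows "partition_on {1..n} (Seg n \<sigma>)"
proof (rule partition_onI)
  show "\<Union>(Seg n \<sigma>) = {1..n}"
    using Seg_cover[OF p] Seg_sigma_section sigma_section_subset by blast
  show "disjnt I J" if "I \<in> Seg n \<sigma>" "J \<in> Seg n \<sigma>" "I \<noteq> J" for I J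
    using Seg_eq_if_meet[OF p] that by (auto simp: disjnt_def)
  show "{} \<notin> Seg n \<sigma>"
    using Seg_sigma_section sigma_section_nonempty by blast
qed

lemma sigma_section_if_interval_Union_Seg:
  assumes p: "\<sigma> permutes {1..n}" and S: "S \<subseteq> Seg n \<sigma>" and uv_eq: "{u..v} = \<Union>S"
    and uv: "1 \<le> u" "u \<le> v" "v \<le> n"
  shows "sigma_section n \<sigma> {u..v}"
proof -
  have inside: "T \<subseteq> {u..v}" if T: "T \<in> Seg n \<sigma>" "T \<inter> {u..v} \<noteq> {}" for T
  proof -
    obtain T' where "T' \<in> S" "T \<inter> T' \<noteq> {}"
      using T(2) unfolding uv_eq by blast
    then have "T = T'"
      using Seg_eq_if_meet[OF p T(1)] S by blast
    then show ?thesis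
      unfolding uv_eq using \<open>T' \<in> S\<close> by blast
  qed
  \<comment> \<open>A segment meeting {u..v} lies inside it, so the segment through a point left of u
    stays left of u.\<close>
  have "cut_point n \<sigma> (u - 1)"
    unfolding cut_point_def closed_set_def
  proof (intro conjI ballI)
    fix x assume x: "x \<in> {1..u - 1}"
    then have "x \<in> {1..n}" "x < u"
      using uv by auto
    then obtain T where T: "T \<in> Seg n \<sigma>" "x \<in> T"
      using Seg_cover[OF p] by blast
    obtain l r where T_eq: "T = {l..r}"
      using Seg_sigma_section[OF T(1)] unfolding sigma_section_def by blast
    have "u \<notin> T"
    proof
      assume "u \<in> T"
      moreover have "u \<in> {u..v}"
        using uv by simp
      ultimately have "T \<subseteq> {u..v}"
        using inside[OF T(1)] by blast
      then show False
        using T(2) \<open>x < u\<close> by auto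
    qed
    then have "r < u"
      using T(2) \<open>x < u\<close> T_eq by auto
    moreover have "closed_set n \<sigma> T"
      using Seg_sigma_section[OF T(1)] by (rule sigma_section_closed)
    then have "\<sigma> x \<in> T" "T \<subseteq> {1..n}"
      using T(2) by (auto simp: closed_set_def)
    ultimately show "\<sigma> x \<in> {1..u - 1}"
      using T_eq by auto
  qed (use uv in auto)
  moreover have "closed_set n \<sigma> {u..v}"
    unfolding uv_eq by (rule closed_set_Union) (use S Seg_sigma_section sigma_section_closed in blast)
  moreover have "{1..v} = {1..u - 1} \<union> {u..v}"
    using uv by auto
  ultimately have "cut_point n \<sigma> v"
    using closed_set_Un by (simp add: cut_point_def)
  moreover have "{u..v} = {Suc (u - 1)..v}" "u - 1 < v"
    using uv by auto
  ultimately show ?thesis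
    unfolding sigma_section_iff_cut_points[OF p] using \<open>cut_point n \<sigma> (u - 1)\<close>
    by (intro exI[of _ "u - 1"] exI[of _ v]) simp
qed

lemma sigma_section_iff_interval_Union_Seg:
  assumes p: "\<sigma> permutes {1..n}"
  shows "sigma_section n \<sigma> I \<longleftrightarrow>
    (\<exists>u v. 1 \<le> u \<and> u \<le> v \<and> v \<le> n \<and> I = {u..v}) \<and> (\<exists>S \<subseteq> Seg n \<sigma>. I = \<Union>S)"
proof
  assume I: "sigma_section n \<sigma> I"
  have "I \<subseteq> \<Union>{T \<in> Seg n \<sigma>. T \<subseteq> I}"
  proof
    fix x assume "x \<in> I"
    then have "x \<in> {1..n}"
      using sigma_section_subset[OF I] by blast
    then obtain T where T: "T \<in> Seg n \<sigma>" "x \<in> T"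
      using Seg_cover[OF p] by blast
    then have "T \<subseteq> I"
      using Seg_subset_sigma_section[OF p T(1) I] \<open>x \<in> I\<close> by blast
    then show "x \<in> \<Union>{T \<in> Seg n \<sigma>. T \<subseteq> I}"
      using T by blast
  qed
  then have "\<exists>S \<subseteq> Seg n \<sigma>. I = \<Union>S"
    by (intro exI[of _ "{T \<in> Seg n \<sigma>. T \<subseteq> I}"]) blast
  moreover have "\<exists>u v. 1 \<le> u \<and> u \<le> v \<and> v \<le> n \<and> I = {u..v}"
    using I unfolding sigma_section_def by blast
  ultimately show "(\<exists>u v. 1 \<le> u \<and> u \<le> v \<and> v \<le> n \<and> I = {u..v}) \<and> (\<exists>S \<subseteq> Seg n \<sigma>. I = \<Union>S)"
    by (intro conjI)
next
  assume "(\<exists>u v. 1 \<le> u \<and> u \<le> v \<and> v \<le> n \<and> I = {u..v}) \<and> (\<exists>S \<subseteq> Seg n \<sigma>. I = \<Union>S)"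
  then obtain u v S where uv: "1 \<le> u" "u \<le> v" "v \<le> n" and I: "I = {u..v}" "I = \<Union>S"
    and S: "S \<subseteq> Seg n \<sigma>"
    by blast
  have "sigma_section n \<sigma> {u..v}"
    using sigma_section_if_interval_Union_Seg[OF p S _ uv] I by simp
  then show "sigma_section n \<sigma> I"
    using I(1) by simp
qed

lemma image_subset_iff_within_block:
  assumes p: "\<sigma> permutes {1..n}" and J: "closed_set n \<sigma> J"
    and \<mu>J: "restr \<mu> J = restr \<sigma> J \<or> restr \<mu> J = inv (restr \<sigma> J)" and B: "B \<subseteq> J"
  shows "\<mu> ` B \<subseteq> B \<longleftrightarrow> \<sigma> ` B \<subseteq> B"
proof -
  have fin: "finite J" "finite B"
    using closed_set_finite[OF J] B finite_subset by blast+
  have "restr \<sigma> J permutes J"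
    using restr_permutes[OF p fin(1)] J by (simp add: closed_set_iff)
  then have inv_iff: "inv (restr \<sigma> J) ` B \<subseteq> B \<longleftrightarrow> restr \<sigma> J ` B \<subseteq> B"
    by (rule permutes_inv_image_subset_iff) (rule fin(2))
  have "\<mu> ` B = restr \<mu> J ` B" "\<sigma> ` B = restr \<sigma> J ` B"
    using restr_image[OF B] by simp_all
  with \<mu>J inv_iff show ?thesis
    by (elim disjE) simp_all
qed

lemma closed_set_eq_if_blockwise_restr:
  assumes p: "\<sigma> permutes {1..n}" and cover: "\<Union>\<J> = {1..n}"
    and closed: "\<And>J. J \<in> \<J> \<Longrightarrow> closed_set n \<sigma> J"
    and restr: "\<And>J. J \<in> \<J> \<Longrightarrow> restr \<mu> J = restr \<sigma> J \<or> restr \<mu> J = inv (restr \<sigma> J)"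
  shows "closed_set n \<mu> = closed_set n \<sigma>"
proof
  fix A
  have same: "\<mu> ` B \<subseteq> B \<longleftrightarrow> \<sigma> ` B \<subseteq> B" if "J \<in> \<J>" "B \<subseteq> J" for J B
    using image_subset_iff_within_block[OF p closed[OF that(1)] restr[OF that(1)] that(2)] .
  have \<sigma>_blocks: "\<sigma> ` J \<subseteq> J" if "J \<in> \<J>" for J
    using closed[OF that] by (simp add: closed_set_iff)
  have \<mu>_blocks: "\<mu> ` J \<subseteq> J" if "J \<in> \<J>" for J
    using \<sigma>_blocks[OF that] same[OF that order_refl] by simp
  show "closed_set n \<mu> A = closed_set n \<sigma> A"
  proof (cases "A \<subseteq> {1..n}")
    case True
    then have A: "A \<subseteq> \<Union>\<J>"
      by (simp add: cover)
    have "(\<forall>J\<in>\<J>. \<mu> ` (A \<inter> J) \<subseteq> A \<inter> J) \<longleftrightarrow> (\<forall>J\<in>\<J>. \<sigma> ` (A \<inter> J) \<subseteq> A \<inter> J)"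
      using same[OF _ Int_lower2] by (rule ball_cong[OF refl])
    then show ?thesis
      using image_subset_iff_blockwise[OF A \<mu>_blocks] image_subset_iff_blockwise[OF A \<sigma>_blocks] True
      by (simp add: closed_set_iff)
  qed (simp add: closed_set_iff)
qed

lemma restr_eq_or_inv_subset:
  assumes p: "\<sigma> permutes {1..n}" and I: "closed_set n \<sigma> I" and J: "closed_set n \<sigma> J"
    and IJ: "I \<subseteq> J" and \<mu>J: "restr \<mu> J = restr \<sigma> J \<or> restr \<mu> J = inv (restr \<sigma> J)"
  shows "restr \<mu> I = restr \<sigma> I \<or> restr \<mu> I = inv (restr \<sigma> I)"
proof -
  have "restr \<sigma> J permutes J"
    using restr_permutes[OF p closed_set_finite[OF J]] J by (simp add: closed_set_iff)
  moreover have "restr \<sigma> J ` I \<subseteq> I"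
    using I IJ restr_image[OF IJ] by (simp add: closed_set_iff)
  ultimately have "inv (restr (restr \<sigma> J) I) = restr (inv (restr \<sigma> J)) I"
    using inv_restr closed_set_finite[OF I] by blast
  then show ?thesis
    using \<mu>J restr_restr[OF IJ, of \<mu>] restr_restr[OF IJ, of \<sigma>] by auto
qed

lemma rho_ie_iff_section_cover:
  assumes p: "\<sigma> permutes {1..n}" and q: "\<mu> permutes {1..n}"
  shows "(\<sigma>, \<mu>) \<in> rho_ie n \<longleftrightarrow>
    (\<exists>Js :: nat set list.
       (\<forall>J \<in> set Js. sigma_section n \<sigma> J) \<and>
       (\<forall>i < length Js. \<forall>j < length Js. i \<noteq> j \<longrightarrow> Js ! i \<inter> Js ! j = {}) \<and>
       \<Union>(set Js) = {1..n} \<and>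
       (\<forall>J \<in> set Js. restr \<mu> J = restr \<sigma> J \<or> restr \<mu> J = inv (restr \<sigma> J)))"
    (is "_ \<longleftrightarrow> ?cover")
proof
  assume r: "(\<sigma>, \<mu>) \<in> rho_ie n"
  have "finite (Seg n \<sigma>)"
    using finite_elements[OF _ partition_on_Seg[OF p]] by simp
  then obtain Js where Js: "set Js = Seg n \<sigma>" "distinct Js"
    using finite_distinct_list by blast
  have "Js ! i \<inter> Js ! j = {}" if ij: "i < length Js" "j < length Js" "i \<noteq> j" for i j
  proof (rule ccontr)
    assume "Js ! i \<inter> Js ! j \<noteq> {}"
    moreover have "Js ! i \<in> Seg n \<sigma>" "Js ! j \<in> Seg n \<sigma>"
      using ij Js(1) nth_mem by blast+
    ultimately have "Js ! i = Js ! j"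
      using Seg_eq_if_meet[OF p] by blast
    then show False
      using ij nth_eq_iff_index_eq[OF Js(2)] by blast
  qed
  moreover have "\<Union>(set Js) = {1..n}"
    using partition_onD1[OF partition_on_Seg[OF p]] Js(1) by simp
  moreover have "\<forall>J \<in> set Js. restr \<mu> J = restr \<sigma> J \<or> restr \<mu> J = inv (restr \<sigma> J)"
    using r Js(1) by (simp add: rho_ie_def)
  ultimately show ?cover
    using Js(1) Seg_sigma_section by (intro exI[of _ Js]) blast
next
  assume ?cover
  then obtain Js where sections: "\<forall>J\<in>set Js. sigma_section n \<sigma> J" and cover: "\<Union>(set Js) = {1..n}"
    and restr: "\<forall>J\<in>set Js. restr \<mu> J = restr \<sigma> J \<or> restr \<mu> J = inv (restr \<sigma> J)"
    by blast
  have "closed_set n \<mu> = closed_set n \<sigma>"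
    using closed_set_eq_if_blockwise_restr[OF p cover] sections restr sigma_section_closed by blast
  then have Seg_eq: "Seg n \<mu> = Seg n \<sigma>"
    unfolding Seg_def sigma_section_def by simp
  have "restr \<mu> I = restr \<sigma> I \<or> restr \<mu> I = inv (restr \<sigma> I)" if I: "I \<in> Seg n \<sigma>" for I
  proof -
    obtain x where "x \<in> I"
      using sigma_section_nonempty[OF Seg_sigma_section[OF I]] by blast
    then have "x \<in> \<Union>(set Js)"
      using sigma_section_subset[OF Seg_sigma_section[OF I]] cover by blast
    then obtain J where J: "J \<in> set Js" "x \<in> J"
      by blast
    then have "I \<subseteq> J"
      using Seg_subset_sigma_section[OF p I] sections \<open>x \<in> I\<close> by blast
    then show ?thesis
      using restr_eq_or_inv_subset[OF p sigma_section_closed[OF Seg_sigma_section[OF I]]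
          sigma_section_closed] sections restr J(1) by blast
  qed
  then show "(\<sigma>, \<mu>) \<in> rho_ie n"
    using p q Seg_eq by (simp add: rho_ie_def Sn_def)
qed

lemma restr_Seg_bij:
  assumes p: "\<sigma> permutes {1..n}" and I: "I \<in> Seg n \<sigma>"
  shows "bij (restr \<sigma> I)"
proof -
  have "closed_set n \<sigma> I"
    using sigma_section_closed[OF Seg_sigma_section[OF I]] .
  then have "restr \<sigma> I permutes I"
    using restr_permutes[OF p closed_set_finite] by (simp add: closed_set_iff)
  then show ?thesis
    by (rule permutes_bij)
qed

lemma equiv_rho_ie: "equiv (Sn n) (rho_ie n)"
proof (rule equivI)
  show "rho_ie n \<subseteq> Sn n \<times> Sn n"
    by (auto simp: rho_ie_def)
  show "refl_on (Sn n) (rho_ie n)"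
    by (auto simp: refl_on_def rho_ie_def)
  show "sym (rho_ie n)"
  proof (rule symI)
    fix \<sigma> \<mu> assume r: "(\<sigma>, \<mu>) \<in> rho_ie n"
    then have p: "\<sigma> permutes {1..n}" and Seg_eq: "Seg n \<sigma> = Seg n \<mu>"
      by (simp_all add: rho_ie_def Sn_def)
    have "restr \<sigma> I = restr \<mu> I \<or> restr \<sigma> I = inv (restr \<mu> I)" if "I \<in> Seg n \<mu>" for I
      using eq_or_inv_sym[OF restr_Seg_bij[OF p]] r that Seg_eq by (simp add: rho_ie_def)
    then show "(\<mu>, \<sigma>) \<in> rho_ie n"
      using r Seg_eq by (simp add: rho_ie_def)
  qed
  show "trans (rho_ie n)"
  proof (rule transI)
    fix \<sigma> \<mu> \<tau> assume r: "(\<sigma>, \<mu>) \<in> rho_ie n" "(\<mu>, \<tau>) \<in> rho_ie n"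
    then have p: "\<sigma> permutes {1..n}" and Seg_eq: "Seg n \<sigma> = Seg n \<mu>" "Seg n \<mu> = Seg n \<tau>"
      by (simp_all add: rho_ie_def Sn_def)
    have "restr \<tau> I = restr \<sigma> I \<or> restr \<tau> I = inv (restr \<sigma> I)" if I: "I \<in> Seg n \<sigma>" for I
    proof (rule eq_or_inv_trans[OF restr_Seg_bij[OF p I]])
      show "restr \<mu> I = restr \<sigma> I \<or> restr \<mu> I = inv (restr \<sigma> I)"
        using r(1) I by (simp add: rho_ie_def)
      show "restr \<tau> I = restr \<mu> I \<or> restr \<tau> I = inv (restr \<mu> I)"
        using r(2) I Seg_eq by (simp add: rho_ie_def)
    qed
    then show "(\<sigma>, \<tau>) \<in> rho_ie n"
      using r Seg_eq by (simp add: rho_ie_def)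
  qed
qed

theorem lemma3p1:
  fixes n :: nat and \<sigma> \<mu> :: "nat \<Rightarrow> nat"
  assumes "\<sigma> \<in> Sn n" and "\<mu> \<in> Sn n"
  shows "partition_on {1..n} (Seg n \<sigma>) \<and>
    (\<forall>I J. sigma_section n \<sigma> I \<and> sigma_section n \<sigma> J \<longrightarrow>
            I \<inter> J = {} \<or> sigma_section n \<sigma> (I \<inter> J)) \<and>
    (\<forall>I. sigma_section n \<sigma> I \<longleftrightarrow>
            ((\<exists>u v. 1 \<le> u \<and> u \<le> v \<and> v \<le> n \<and> I = {u..v}) \<and>
             (\<exists>S \<subseteq> Seg n \<sigma>. I = \<Union>S))) \<and>
    ((\<sigma>, \<mu>) \<in> rho_ie n \<longleftrightarrow>
            (\<exists>Js :: nat set list.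
               (\<forall>J \<in> set Js. sigma_section n \<sigma> J) \<and>
               (\<forall>i < length Js. \<forall>j < length Js. i \<noteq> j \<longrightarrow> Js ! i \<inter> Js ! j = {}) \<and>
               \<Union>(set Js) = {1..n} \<and>
               (\<forall>J \<in> set Js. restr \<mu> J = restr \<sigma> J \<or> restr \<mu> J = inv (restr \<sigma> J)))) \<and>
    equiv (Sn n) (rho_ie n)"
proof -
  have p: "\<sigma> permutes {1..n}" and q: "\<mu> permutes {1..n}"
    using assms by (simp_all add: Sn_def)
  show ?thesis
  proof (intro conjI allI impI)
    show "partition_on {1..n} (Seg n \<sigma>)"
      by (rule partition_on_Seg[OF p])
    show "I \<inter> J = {} \<or> sigma_section n \<sigma> (I \<inter> J)"
      if "sigma_section n \<sigma> I \<and> sigma_section n \<sigma> J" for I J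
      using sigma_section_Int[OF p] that by blast
  qed (fact sigma_section_iff_interval_Union_Seg[OF p] rho_ie_iff_section_cover[OF p q] equiv_rho_ie)+
qed

end
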